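(* Let $n\ge3$ and let $q_1,\dots,q_n\ge2$ be integers such that $\prod_{k=1}^n\big(1+\frac{1}{q_k}\big)\ge n\log n$ (natural logarithm). Then $Q=[q_1]\times\cdots\times[q_n]$ can be covered by hyperplanes, each with a non-empty set of fixed coordinates, no two of which are parallel.
   Context: $[m]=\{1,\dots,m\}$. A hyperplane in $Q=S_1\times\cdots\times S_n$ is $A=A_1\times\cdots\times A_n$ with each $A_k$ either $S_k$ or a singleton in $S_k$; $F(A)=\{k:A_k\text{ is a singleton}\}$ is its set of fixed coordinates; two hyperplanes are parallel if they have the same set of fixed coordinates. *)

theory Defs
  imports "HOL-Analysis.Analysis"
begin

definition grid :: "nat \<Rightarrow> (nat \<Rightarrow> nat) \<Rightarrow> (nat \<Rightarrow> nat) set" where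
  "grid n q = PiE {1..n} (\<lambda>k. {1..q k})"

definition is_hyperplane_factors :: "nat \<Rightarrow> (nat \<Rightarrow> nat) \<Rightarrow> (nat \<Rightarrow> nat set) \<Rightarrow> bool" where
  "is_hyperplane_factors n q A \<longleftrightarrow> A \<in> extensional {1..n} \<and>
     (\<forall>k\<in>{1..n}. A k = {1..q k} \<or> (\<exists>s\<in>{1..q k}. A k = {s}))"

definition hyperplane_set :: "nat \<Rightarrow> (nat \<Rightarrow> nat set) \<Rightarrow> (nat \<Rightarrow> nat) set" where
  "hyperplane_set n A = PiE {1..n} A"

definition fixed_coords :: "nat \<Rightarrow> (nat \<Rightarrow> nat set) \<Rightarrow> nat set" where
  "fixed_coords n A = {k\<in>{1..n}. \<exists>s. A k = {s}}"

end

theory Submission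
  imports Defs
begin

(* Pick coordinates T with  sum_{k in T} ln q_k < prod_{k in T} (1 + 1/q_k) - 1.  The hypothesis
   provides one: all of [n] when n <= 6, where it forces every q_k = 2, and {k. q_k <= n} otherwise.
   For each nonempty S <= T choose, greedily, one hyperplane with fixed coordinates S through the
   point of the subgrid prod_{k in T} [q_k] shared by the most points not yet covered; by pigeonhole
   it covers at least a fraction 1 / prod_{k in S} q_k of them.  Hence at most
     prod_k q_k * prod_S (1 - 1 / prod_{k in S} q_k) <= exp (sum_k ln q_k - (prod_k (1 + 1/q_k) - 1)) < 1
   points remain uncovered, so the subgrid is covered, and with it all of Q. *)

lemma exists_large_fibre:
  assumes "finite U" "finite B" "B \<noteq> {}" "f ` U \<subseteq> B"
  shows "\<exists>b\<in>B. card U \<le> card B * card {x\<in>U. f x = b}"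
proof (rule ccontr)
  assume "\<not> ?thesis"
  then have "(\<Sum>b\<in>B. card B * card {x\<in>U. f x = b}) < (\<Sum>b\<in>B. card U)"
    using assms(2,3) by (intro sum_strict_mono) auto
  moreover have "(\<Sum>b\<in>B. card {x\<in>U. f x = b}) = card U"
    using sum.group[OF assms(1,2,4), of "\<lambda>_. 1::nat"] by simp
  ultimately show False by (simp flip: sum_distrib_left)
qed

lemma exists_rich_partial_point:
  assumes "finite T" "\<forall>k\<in>T. finite (A k) \<and> A k \<noteq> {}" "S \<subseteq> T" "U \<subseteq> PiE T A"
  shows "\<exists>b\<in>PiE S A. card U \<le> card (PiE S A) * card {x\<in>U. \<forall>k\<in>S. x k = b k}"
proof -
  have "finite U"
    using assms(1,2,4) by (meson finite_PiE finite_subset)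
  moreover have "finite (PiE S A)" "PiE S A \<noteq> {}"
    using assms(1-3) finite_subset by (auto intro!: finite_PiE simp: PiE_eq_empty_iff)
  moreover have "(\<lambda>x. restrict x S) ` U \<subseteq> PiE S A"
    using assms(3,4) by (auto simp: PiE_iff subset_iff)
  ultimately obtain b where b: "b \<in> PiE S A"
    and large: "card U \<le> card (PiE S A) * card {x\<in>U. restrict x S = b}"
    using exists_large_fibre[of U "PiE S A" "\<lambda>x. restrict x S"] by blast
  have "{x\<in>U. restrict x S = b} = {x\<in>U. \<forall>k\<in>S. x k = b k}"
    using b by (auto simp: PiE_iff restrict_def extensional_def fun_eq_iff)
  with b large show ?thesis by auto
qed

lemma card_Diff_le_fraction:
  assumes "finite U" "M \<subseteq> U" "card U \<le> c * card M" "0 < c"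
  shows "real (card (U - M)) \<le> real (card U) * (1 - 1 / real c)"
proof -
  have "finite M"
    using assms(1,2) by (rule finite_subset[rotated])
  have "real (card U) \<le> real c * real (card M)"
    using assms(3) unfolding of_nat_mult [symmetric] of_nat_le_iff .
  then have "real (card U) / real c \<le> real (card M)"
    using assms(4) by (simp add: field_simps)
  moreover have "real (card (U - M)) = real (card U) - real (card M)"
    using \<open>finite M\<close> assms(1,2) by (simp add: card_Diff_subset of_nat_diff card_mono)
  ultimately show ?thesis
    by (simp add: algebra_simps)
qed

lemma greedy_partial_points:
  assumes T: "finite T" "\<forall>k\<in>T. finite (A k) \<and> A k \<noteq> {}" and "finite F" "F \<subseteq> Pow T"
  shows "\<exists>a. (\<forall>S\<in>F. a S \<in> PiE S A) \<and>
    real (card {x\<in>PiE T A. \<forall>S\<in>F. \<exists>k\<in>S. x k \<noteq> a S k})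
      \<le> real (card (PiE T A)) * (\<Prod>S\<in>F. 1 - 1 / real (card (PiE S A)))"
  using assms(3,4)
proof (induction F rule: finite_induct)
  case empty
  then show ?case by simp
next
  case (insert S F)
  then obtain a where a: "\<forall>S\<in>F. a S \<in> PiE S A"
    and IH: "real (card {x\<in>PiE T A. \<forall>S\<in>F. \<exists>k\<in>S. x k \<noteq> a S k})
      \<le> real (card (PiE T A)) * (\<Prod>S\<in>F. 1 - 1 / real (card (PiE S A)))"
    by auto
  define U where "U = {x\<in>PiE T A. \<forall>S\<in>F. \<exists>k\<in>S. x k \<noteq> a S k}"
  have "S \<subseteq> T" "U \<subseteq> PiE T A"
    using insert.prems unfolding U_def by auto
  then obtain b where b: "b \<in> PiE S A"
    and large: "card U \<le> card (PiE S A) * card {x\<in>U. \<forall>k\<in>S. x k = b k}"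
    using exists_rich_partial_point[OF T] by blast
  define M where "M = {x\<in>U. \<forall>k\<in>S. x k = b k}"
  have "finite U"
    unfolding U_def using T by (simp add: finite_PiE)
  have c_pos: "card (PiE S A) > 0"
    using b T \<open>S \<subseteq> T\<close> finite_subset by (subst card_gt_0_iff) (auto intro!: finite_PiE)
  have "real (card (U - M)) \<le> real (card U) * (1 - 1 / real (card (PiE S A)))"
    using \<open>finite U\<close> large c_pos unfolding M_def by (intro card_Diff_le_fraction) auto
  also have "\<dots> \<le> real (card (PiE T A)) * (\<Prod>S\<in>F. 1 - 1 / real (card (PiE S A)))
      * (1 - 1 / real (card (PiE S A)))"
    using IH c_pos unfolding U_def by (intro mult_right_mono) auto
  also have "\<dots> = real (card (PiE T A)) * (\<Prod>S\<in>insert S F. 1 - 1 / real (card (PiE S A)))"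
    using insert.hyps by simp
  also have "U - M = {x\<in>PiE T A. \<forall>S'\<in>insert S F. \<exists>k\<in>S'. x k \<noteq> (a(S := b)) S' k}"
    unfolding U_def M_def using insert.hyps(2) by auto
  finally show ?case
    using a b insert.hyps(2) by (intro exI[of _ "a(S := b)"]) auto
qed

lemma sum_prod_nonempty_subsets:
  fixes g :: "'a \<Rightarrow> 'b::comm_ring_1"
  assumes "finite T"
  shows "(\<Sum>S\<in>Pow T - {{}}. \<Prod>k\<in>S. g k) = (\<Prod>k\<in>T. 1 + g k) - 1"
proof -
  have "(\<Prod>k\<in>T. g k + 1) = (\<Sum>S\<in>Pow T. \<Prod>k\<in>S. g k)"
    using prod_add[OF assms, of g "\<lambda>_. 1"] by simp
  then show ?thesis
    using assms by (simp add: sum_diff1 add.commute)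
qed

lemma prod_one_minus_le_exp_neg_sum:
  fixes x :: "'a \<Rightarrow> real"
  assumes "\<forall>i\<in>I. x i \<le> 1"
  shows "(\<Prod>i\<in>I. 1 - x i) \<le> exp (- (\<Sum>i\<in>I. x i))"
proof (cases "finite I")
  case True
  have "(\<Prod>i\<in>I. 1 - x i) \<le> (\<Prod>i\<in>I. exp (- x i))"
    using assms by (intro prod_mono) (auto simp: exp_ge_add_one_self[of "- x _", simplified])
  also have "\<dots> = exp (- (\<Sum>i\<in>I. x i))"
    using True by (simp add: exp_sum flip: sum_negf)
  finally show ?thesis .
qed simp

lemma product_covered_by_partial_points:
  assumes T: "finite T" "\<forall>k\<in>T. finite (A k) \<and> A k \<noteq> {}"
    and small: "(\<Sum>k\<in>T. ln (real (card (A k)))) < (\<Prod>k\<in>T. 1 + 1 / real (card (A k))) - 1"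
  obtains a where "\<forall>S\<in>Pow T - {{}}. a S \<in> PiE S A"
    and "\<forall>x\<in>PiE T A. \<exists>S\<in>Pow T - {{}}. \<forall>k\<in>S. x k = a S k"
proof -
  define F where "F = Pow T - {{}}"
  obtain a where a: "\<forall>S\<in>F. a S \<in> PiE S A"
    and greedy: "real (card {x\<in>PiE T A. \<forall>S\<in>F. \<exists>k\<in>S. x k \<noteq> a S k})
      \<le> real (card (PiE T A)) * (\<Prod>S\<in>F. 1 - 1 / real (card (PiE S A)))"
    using greedy_partial_points[OF T, of F] T unfolding F_def by auto
  define U where "U = {x\<in>PiE T A. \<forall>S\<in>F. \<exists>k\<in>S. x k \<noteq> a S k}"
  have card_T: "real (card (PiE T A)) = exp (\<Sum>k\<in>T. ln (real (card (A k))))"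
    using T by (simp add: card_PiE exp_sum card_gt_0_iff)
  have "(\<Sum>S\<in>F. 1 / real (card (PiE S A))) = (\<Sum>S\<in>F. \<Prod>k\<in>S. 1 / real (card (A k)))"
    using T(1) unfolding F_def by (intro sum.cong) (auto simp: card_PiE prod_dividef finite_subset)
  also have "\<dots> = (\<Prod>k\<in>T. 1 + 1 / real (card (A k))) - 1"
    unfolding F_def using T(1) by (rule sum_prod_nonempty_subsets)
  finally have sum_F: "(\<Sum>S\<in>F. 1 / real (card (PiE S A))) = \<dots>" .
  have "(\<Prod>S\<in>F. 1 - 1 / real (card (PiE S A))) \<le> exp (- (\<Sum>S\<in>F. 1 / real (card (PiE S A))))"
    by (rule prod_one_minus_le_exp_neg_sum) (auto simp: divide_le_eq_1)
  then have "real (card U) \<le> real (card (PiE T A)) * exp (- (\<Sum>S\<in>F. 1 / real (card (PiE S A))))"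
    using greedy unfolding U_def by (meson mult_left_mono of_nat_0_le_iff order_trans)
  also have "\<dots> = exp ((\<Sum>k\<in>T. ln (real (card (A k)))) - ((\<Prod>k\<in>T. 1 + 1 / real (card (A k))) - 1))"
    unfolding card_T sum_F by (simp flip: exp_add)
  also have "\<dots> < 1"
    using small by simp
  finally have "card U = 0"
    by simp
  moreover have "finite U"
    unfolding U_def using T by (simp add: finite_PiE)
  ultimately have "\<forall>x\<in>PiE T A. \<exists>S\<in>F. \<forall>k\<in>S. x k = a S k"
    unfolding U_def by auto
  with a show ?thesis
    unfolding F_def by (rule that)
qed

definition hyperplane_fixing :: "nat \<Rightarrow> (nat \<Rightarrow> nat) \<Rightarrow> nat set \<Rightarrow> (nat \<Rightarrow> nat) \<Rightarrow> nat \<Rightarrow> nat set"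
  where "hyperplane_fixing n q S b = restrict (\<lambda>k. if k \<in> S then {b k} else {1..q k}) {1..n}"

lemma is_hyperplane_factors_hyperplane_fixing:
  assumes "\<forall>k\<in>S. b k \<in> {1..q k}"
  shows "is_hyperplane_factors n q (hyperplane_fixing n q S b)"
  using assms unfolding is_hyperplane_factors_def hyperplane_fixing_def by auto

(* For q k = 1 the free factor {1..q k} would itself be a singleton, hence count as fixed. *)
lemma fixed_coords_hyperplane_fixing:
  assumes "S \<subseteq> {1..n}" "\<forall>k\<in>{1..n}. 2 \<le> q k"
  shows "fixed_coords n (hyperplane_fixing n q S b) = S"
proof -
  have "{1..q k} \<noteq> {s}" if "k \<in> {1..n}" for k s
  proof -
    have "2 \<le> q k"
      using assms(2) that by blast
    then have "{1, 2} \<subseteq> {1..q k}"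
      by auto
    then show ?thesis by auto
  qed
  with assms(1) show ?thesis
    unfolding fixed_coords_def hyperplane_fixing_def by auto
qed

lemma mem_hyperplane_set_hyperplane_fixing:
  assumes "x \<in> grid n q" "\<forall>k\<in>S. x k = b k"
  shows "x \<in> hyperplane_set n (hyperplane_fixing n q S b)"
  using assms unfolding grid_def hyperplane_set_def hyperplane_fixing_def by (auto simp: PiE_iff)

lemma grid_covered_if_subgrid_covered:
  assumes q: "\<forall>k\<in>{1..n}. 2 \<le> q k" and T: "T \<subseteq> {1..n}"
    and a: "\<forall>S\<in>Pow T - {{}}. a S \<in> PiE S (\<lambda>k. {1..q k})"
    and cover: "\<forall>x\<in>PiE T (\<lambda>k. {1..q k}). \<exists>S\<in>Pow T - {{}}. \<forall>k\<in>S. x k = a S k"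
  shows "\<exists>H. (\<forall>A\<in>H. is_hyperplane_factors n q A \<and> fixed_coords n A \<noteq> {})
           \<and> (\<forall>A\<in>H. \<forall>B\<in>H. A \<noteq> B \<longrightarrow> fixed_coords n A \<noteq> fixed_coords n B)
           \<and> grid n q \<subseteq> (\<Union>A\<in>H. hyperplane_set n A)"
proof (intro exI conjI)
  let ?H = "(\<lambda>S. hyperplane_fixing n q S (a S)) ` (Pow T - {{}})"
  have fixed: "fixed_coords n (hyperplane_fixing n q S (a S)) = S" if "S \<in> Pow T - {{}}" for S
    using that T q by (intro fixed_coords_hyperplane_fixing) auto
  show "\<forall>A\<in>?H. is_hyperplane_factors n q A \<and> fixed_coords n A \<noteq> {}"
  proof
    fix A assume "A \<in> ?H"
    then obtain S where S: "S \<in> Pow T - {{}}" and A: "A = hyperplane_fixing n q S (a S)"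
      by blast
    have "\<forall>k\<in>S. a S k \<in> {1..q k}"
      using a S PiE_mem by blast
    then show "is_hyperplane_factors n q A \<and> fixed_coords n A \<noteq> {}"
      using fixed[OF S] S unfolding A by (auto intro: is_hyperplane_factors_hyperplane_fixing)
  qed
  show "\<forall>A\<in>?H. \<forall>B\<in>?H. A \<noteq> B \<longrightarrow> fixed_coords n A \<noteq> fixed_coords n B"
    using fixed by auto
  show "grid n q \<subseteq> (\<Union>A\<in>?H. hyperplane_set n A)"
  proof
    fix x assume x: "x \<in> grid n q"
    then have "restrict x T \<in> PiE T (\<lambda>k. {1..q k})"
      using T unfolding grid_def by (auto simp: PiE_iff)
    then obtain S where S: "S \<in> Pow T - {{}}" and "\<forall>k\<in>S. restrict x T k = a S k"
      using cover by blast
    then have "\<forall>k\<in>S. x k = a S k"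
      by (metis Diff_iff PowD restrict_apply' subsetD)
    with x S show "x \<in> (\<Union>A\<in>?H. hyperplane_set n A)"
      by (blast intro: mem_hyperplane_set_hyperplane_fixing)
  qed
qed

lemma ln_ge_one_plus:
  fixes x y :: real
  assumes "0 \<le> x" "x \<le> 1" "272/100 * (1 + x + x^2) \<le> y"
  shows "1 + x \<le> ln y"
proof -
  have "exp (1 + x) \<le> 272/100 * (1 + x + x^2)"
    unfolding exp_add using e_less_272 exp_bound[OF assms(1,2)] by (intro mult_mono) auto
  with assms(3) have "exp (1 + x) \<le> y"
    by linarith
  moreover from this have "0 < y"
    using exp_gt_zero less_le_trans by blast
  ultimately show ?thesis
    by (simp add: ln_ge_iff)
qed

lemma ln_2_less: "ln (2::real) < 3/4"
proof -
  have "2 < exp (3/4::real)"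
    using exp_lower_Taylor_quadratic[of "3/4::real"] by (simp add: power2_eq_square)
  then show ?thesis
    using ln_less_cancel_iff[of 2 "exp (3/4)"] by simp
qed

lemma ln_3_gt_1: "1 < ln (3::real)"
  using e_less_272 ln_less_cancel_iff[of "exp 1" 3] by simp

lemma ln_4_ge: "6/5 \<le> ln (4::real)"
  using ln_ge_one_plus[of "1/5" 4] by (simp add: power2_eq_square)

lemma ln_5_ge: "7/5 \<le> ln (5::real)"
  using ln_ge_one_plus[of "2/5" 5] by (simp add: power2_eq_square)

lemma ln_6_ge: "17/10 \<le> ln (6::real)"
  using ln_ge_one_plus[of "7/10" 6] by (simp add: power2_eq_square)

lemma ln_7_ge: "9/5 \<le> ln (7::real)"
  using ln_ge_one_plus[of "4/5" 7] by (simp add: power2_eq_square)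

lemma ln_7_2_ge: "6/5 \<le> ln (7/2::real)"
  using ln_ge_one_plus[of "1/5" "7/2"] by (simp add: power2_eq_square)

lemma ln_9_2_ge: "29/20 \<le> ln (9/2::real)"
  using ln_ge_one_plus[of "9/20" "9/2"] by (simp add: power2_eq_square)

lemma all_two_if_small_dimension:
  fixes q :: "nat \<Rightarrow> nat"
  assumes n: "3 \<le> n" "n \<le> 6" and q: "\<forall>k\<in>{1..n}. 2 \<le> q k"
    and P: "real n * ln (real n) \<le> (\<Prod>k=1..n. 1 + 1 / real (q k))"
  shows "\<forall>k\<in>{1..n}. q k = 2"
proof (rule ccontr)
  assume "\<not> (\<forall>k\<in>{1..n}. q k = 2)"
  then obtain j where j: "j \<in> {1..n}" "3 \<le> q j"
    using q by force
  have "(\<Prod>k\<in>{1..n}-{j}. 1 + 1 / real (q k)) \<le> (3/2) ^ (n - 1)"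
  proof (rule prod_le_power)
    fix k assume "k \<in> {1..n}-{j}"
    then have "2 \<le> q k"
      using q by auto
    then show "0 \<le> 1 + 1 / real (q k) \<and> 1 + 1 / real (q k) \<le> 3/2"
      by (auto simp: field_simps)
  qed (use j in auto)
  moreover have "1 + 1 / real (q j) \<le> 4/3"
    using j(2) by (simp add: field_simps)
  ultimately have "(1 + 1 / real (q j)) * (\<Prod>k\<in>{1..n}-{j}. 1 + 1 / real (q k)) \<le> 4/3 * (3/2) ^ (n - 1)"
    by (intro mult_mono) (auto intro: prod_nonneg)
  also have "(1 + 1 / real (q j)) * (\<Prod>k\<in>{1..n}-{j}. 1 + 1 / real (q k)) = (\<Prod>k=1..n. 1 + 1 / real (q k))"
    using j by (intro prod.remove [symmetric]) auto
  finally have "real n * ln (real n) \<le> 4/3 * (3/2) ^ (n - 1)"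
    using P by linarith
  moreover have "n = 3 \<or> n = 4 \<or> n = 5 \<or> n = 6"
    using n by auto
  ultimately show False
    using ln_3_gt_1 ln_4_ge ln_5_ge ln_6_ge by (auto simp: eval_nat_numeral)
qed

lemma sum_ln_less_prod_small_dimension:
  fixes q :: "nat \<Rightarrow> nat"
  assumes n: "3 \<le> n" "n \<le> 6" and q: "\<forall>k\<in>{1..n}. 2 \<le> q k"
    and P: "real n * ln (real n) \<le> (\<Prod>k=1..n. 1 + 1 / real (q k))"
  shows "(\<Sum>k=1..n. ln (real (q k))) < (\<Prod>k=1..n. 1 + 1 / real (q k)) - 1"
proof -
  have "\<forall>k\<in>{1..n}. q k = 2"
    using all_two_if_small_dimension[OF assms] .
  then have "(\<Sum>k=1..n. ln (real (q k))) = real n * ln 2"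
    and "(\<Prod>k=1..n. 1 + 1 / real (q k)) = (3/2) ^ n"
    by simp_all
  moreover have "n = 3 \<or> n = 4 \<or> n = 5 \<or> n = 6"
    using n by auto
  ultimately show ?thesis
    using ln_2_less by (auto simp: eval_nat_numeral)
qed

(* ln x is a convex function of 1/x, so it lies below its chord between x = 2 and x = N. *)
lemma ln_le_chord_of_inverse:
  fixes x N :: real
  assumes "2 \<le> x" "x \<le> N"
  shows "ln x \<le> ln N - (ln N - ln 2) / (1/2 - 1/N) * (1/x - 1/N)"
proof -
  have "{1/N..1/2} \<subseteq> {0<..}"
    using assms by (auto intro: less_le_trans[of 0 "1/N"])
  then have "concave_on {1/N..1/2} ln"
    using ln_concave unfolding concave_on_def by (auto intro: convex_on_subset)
  moreover have "1/x \<in> {1/N..1/2}"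
    using assms by (auto simp: field_simps)
  ultimately have "(ln (1/2) - ln (1/N)) / (1/2 - 1/N) * (1/x - 1/N) + ln (1/N) \<le> ln (1/x)"
    by (rule concave_onD_Icc')
  then show ?thesis
    using assms by (simp add: ln_div)
qed

lemma prod_one_plus_inverse_le_exp:
  fixes q :: "'a \<Rightarrow> nat"
  assumes "finite K" "\<forall>k\<in>K. N \<le> q k" "0 < N"
  shows "(\<Prod>k\<in>K. 1 + 1 / real (q k)) \<le> exp (real (card K) / real N)"
proof -
  have "(\<Prod>k\<in>K. 1 + 1 / real (q k)) \<le> (\<Prod>k\<in>K. exp (1 / real N))"
  proof (intro prod_mono conjI)
    fix k assume "k \<in> K"
    then have "1 / real (q k) \<le> 1 / real N"
      using assms(2,3) by (intro divide_left_mono) auto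
    then show "1 + 1 / real (q k) \<le> exp (1 / real N)"
      using exp_ge_add_one_self[of "1 / real N"] by linarith
  qed simp
  also have "\<dots> = exp (real (card K) / real N)"
    by (simp flip: exp_of_nat_mult)
  finally show ?thesis .
qed

lemma prod_one_plus_inverse_mult_le:
  fixes q :: "'a \<Rightarrow> nat"
  assumes "finite K" "\<forall>k\<in>K. N < q k" "card K \<le> N"
  shows "(\<Prod>k\<in>K. 1 + 1 / real (q k)) * real (N - card K) \<le> real N"
proof -
  define R where "R = (\<Prod>k\<in>K. 1 + 1 / real (q k))"
  define t where "t = real (card K) / real (N + 1)"
  have "R \<le> exp t"
    unfolding R_def t_def using assms(1,2) by (intro prod_one_plus_inverse_le_exp) auto
  then have "R * exp (- t) \<le> 1"
    by (simp add: exp_minus field_simps)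
  moreover have "R * (1 - t) \<le> R * exp (- t)"
    unfolding R_def using exp_ge_add_one_self[of "- t"] by (intro mult_left_mono prod_nonneg) auto
  ultimately have "R * (1 - t) * (real N + 1) \<le> real N + 1"
    by simp
  moreover have "R * (1 - t) * (real N + 1) = R * (real N + 1 - real (card K))"
    unfolding t_def by (simp add: field_simps)
  ultimately have "R * (real N + 1 - real (card K)) \<le> real N + 1"
    by simp
  moreover have "1 \<le> R"
    unfolding R_def by (intro prod_ge_1) auto
  ultimately show ?thesis
    unfolding R_def using assms(3) by (simp add: of_nat_diff algebra_simps)
qed

lemma ln_chord_slope_ge:
  assumes "7 \<le> n"
  shows "12/5 \<le> (ln (real n) - ln 2) / (1/2 - 1 / real n)"
proof -
  have "ln (7/2) \<le> ln (real n / 2)"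
    using assms by (subst ln_le_cancel_iff) auto
  moreover have "ln (real n / 2) = ln (real n) - ln 2"
    using assms by (simp add: ln_div)
  ultimately have "6/5 \<le> ln (real n) - ln 2"
    using ln_7_2_ge by simp
  moreover have "12/5 * (1/2 - 1 / real n) \<le> 6/5"
    by (simp add: right_diff_distrib)
  ultimately have "12/5 * (1/2 - 1 / real n) \<le> ln (real n) - ln 2"
    by linarith
  moreover have "0 < 1/2 - 1 / real n"
    using assms by (auto simp: field_simps)
  ultimately show ?thesis
    by (simp add: pos_le_divide_eq)
qed

lemma prod_small_coordinates_lower_bounds:
  fixes q :: "nat \<Rightarrow> nat"
  assumes n: "7 \<le> n"
    and P: "real n * ln (real n) \<le> (\<Prod>k=1..n. 1 + 1 / real (q k))"
  defines "T \<equiv> {k\<in>{1..n}. q k \<le> n}"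
  shows "real (card T) * ln (real n) \<le> (\<Prod>k\<in>T. 1 + 1 / real (q k))"
    and "9/2 \<le> (\<Prod>k\<in>T. 1 + 1 / real (q k))"
proof -
  define PT where "PT = (\<Prod>k\<in>T. 1 + 1 / real (q k))"
  define R where "R = (\<Prod>k\<in>{1..n} - T. 1 + 1 / real (q k))"
  have "T \<subseteq> {1..n}"
    unfolding T_def by auto
  then have "card T \<le> n" and card_rest: "card ({1..n} - T) = n - card T"
    by (auto simp: card_Diff_subset finite_subset dest: card_mono[rotated])
  have large: "\<forall>k\<in>{1..n} - T. n < q k"
    unfolding T_def by auto
  have PT_R: "(\<Prod>k=1..n. 1 + 1 / real (q k)) = R * PT"
    unfolding PT_def R_def using \<open>T \<subseteq> {1..n}\<close> by (rule prod.subset_diff) simp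
  have "0 \<le> PT"
    unfolding PT_def by (intro prod_nonneg) auto
  have "R * real (card T) \<le> real n"
    using prod_one_plus_inverse_mult_le[of "{1..n} - T" n q] large card_rest \<open>card T \<le> n\<close>
    unfolding R_def by auto
  have "real n * (real (card T) * ln (real n)) = real (card T) * (real n * ln (real n))"
    by (simp add: ac_simps)
  also have "\<dots> \<le> real (card T) * (R * PT)"
    using P PT_R by (intro mult_left_mono) auto
  also have "\<dots> = PT * (R * real (card T))"
    by (simp add: ac_simps)
  also have "\<dots> \<le> PT * real n"
    using \<open>R * real (card T) \<le> real n\<close> \<open>0 \<le> PT\<close> by (rule mult_left_mono)
  finally have "real n * (real (card T) * ln (real n)) \<le> real n * PT"
    by (simp add: mult.commute)
  then show "real (card T) * ln (real n) \<le> PT"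
    using n by simp
  have "R \<le> exp (real (n - card T) / real n)"
    using prod_one_plus_inverse_le_exp[of "{1..n} - T" n q] large card_rest n
    unfolding R_def by (auto simp: less_imp_le)
  also have "\<dots> \<le> exp 1"
    using n by (simp add: divide_le_eq_1)
  finally have "R < 272/100"
    using e_less_272 by linarith
  moreover have "7 * (9/5) \<le> real n * ln (real n)"
  proof -
    have "ln 7 \<le> ln (real n)"
      using n by (subst ln_le_cancel_iff) auto
    with ln_7_ge have "9/5 \<le> ln (real n)"
      by linarith
    with n show ?thesis
      by (intro mult_mono) auto
  qed
  ultimately show "9/2 \<le> PT"
    using P PT_R \<open>0 \<le> PT\<close> mult_right_mono[of R "272/100" PT] by linarith
qed

lemma sum_ln_less_prod_large_dimension:
  fixes q :: "nat \<Rightarrow> nat"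
  assumes n: "7 \<le> n" and q: "\<forall>k\<in>{1..n}. 2 \<le> q k"
    and P: "real n * ln (real n) \<le> (\<Prod>k=1..n. 1 + 1 / real (q k))"
  defines "T \<equiv> {k\<in>{1..n}. q k \<le> n}"
  shows "(\<Sum>k\<in>T. ln (real (q k))) < (\<Prod>k\<in>T. 1 + 1 / real (q k)) - 1"
proof -
  define m where "m = card T"
  define PT where "PT = (\<Prod>k\<in>T. 1 + 1 / real (q k))"
  define c where "c = (ln (real n) - ln 2) / (1/2 - 1 / real n)"
  define s where "s = (\<Sum>k\<in>T. 1 / real (q k))"
  have "finite T" "m \<le> n"
    unfolding m_def T_def by (auto intro: card_mono[of "{1..n}", simplified])
  have PT_ge: "real m * ln (real n) \<le> PT" "9/2 \<le> PT"
    unfolding m_def PT_def T_def using prod_small_coordinates_lower_bounds[OF n P] by auto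
  have "ln (9/2) \<le> ln PT"
    using PT_ge(2) by (subst ln_le_cancel_iff) auto
  then have "29/20 \<le> ln PT"
    using ln_9_2_ge by linarith
  have "ln PT = (\<Sum>k\<in>T. ln (1 + 1 / real (q k)))"
    unfolding PT_def using \<open>finite T\<close> by (subst ln_prod) (auto simp: add_eq_0_iff divide_eq_eq)
  also have "\<dots> \<le> s"
    unfolding s_def by (intro sum_mono ln_add_one_self_le_self) auto
  finally have "ln PT \<le> s" .
  have "12/5 \<le> c"
    unfolding c_def using n by (rule ln_chord_slope_ge)
  have "(\<Sum>k\<in>T. ln (real (q k))) \<le> (\<Sum>k\<in>T. ln (real n) - c * (1 / real (q k) - 1 / real n))"
    unfolding c_def using q by (intro sum_mono ln_le_chord_of_inverse) (auto simp: T_def)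
  also have "\<dots> = real m * ln (real n) - c * s + c * real m / real n"
    unfolding s_def m_def by (simp add: sum_subtractf sum_distrib_left algebra_simps)
  also have "\<dots> \<le> PT - c * ln PT + c"
  proof -
    have "c * real m / real n \<le> c"
      using \<open>m \<le> n\<close> \<open>12/5 \<le> c\<close> n by (simp add: divide_le_eq mult_left_mono)
    moreover have "c * ln PT \<le> c * s"
      using \<open>ln PT \<le> s\<close> \<open>12/5 \<le> c\<close> by (intro mult_left_mono) auto
    ultimately show ?thesis
      using PT_ge(1) by linarith
  qed
  also have "\<dots> < PT - 1"
  proof -
    have "12/5 * (9/20) \<le> c * (ln PT - 1)"
      using \<open>12/5 \<le> c\<close> \<open>29/20 \<le> ln PT\<close> by (intro mult_mono) auto
    then show ?thesis
      by (simp add: algebra_simps)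
  qed
  finally show ?thesis
    unfolding PT_def .
qed

lemma exists_subset_sum_ln_less_prod:
  fixes q :: "nat \<Rightarrow> nat"
  assumes n: "3 \<le> n" and q: "\<forall>k\<in>{1..n}. 2 \<le> q k"
    and P: "real n * ln (real n) \<le> (\<Prod>k=1..n. 1 + 1 / real (q k))"
  shows "\<exists>T\<subseteq>{1..n}. (\<Sum>k\<in>T. ln (real (q k))) < (\<Prod>k\<in>T. 1 + 1 / real (q k)) - 1"
proof (cases "n \<le> 6")
  case True
  then show ?thesis
    using sum_ln_less_prod_small_dimension[OF n True q P] by blast
next
  case False
  then show ?thesis
    using sum_ln_less_prod_large_dimension[OF _ q P] by (intro exI[of _ "{k\<in>{1..n}. q k \<le> n}"]) auto
qed

theorem lemma4p2:
  fixes n :: nat and q :: "nat \<Rightarrow> nat"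
  assumes "n \<ge> 3"
    and "\<forall>k\<in>{1..n}. q k \<ge> 2"
    and "(\<Prod>k=1..n. 1 + 1 / real (q k)) \<ge> real n * ln (real n)"
  shows "\<exists>H. (\<forall>A\<in>H. is_hyperplane_factors n q A \<and> fixed_coords n A \<noteq> {})
           \<and> (\<forall>A\<in>H. \<forall>B\<in>H. A \<noteq> B \<longrightarrow> fixed_coords n A \<noteq> fixed_coords n B)
           \<and> grid n q \<subseteq> (\<Union>A\<in>H. hyperplane_set n A)"
proof -
  obtain T where T: "T \<subseteq> {1..n}"
    and small: "(\<Sum>k\<in>T. ln (real (q k))) < (\<Prod>k\<in>T. 1 + 1 / real (q k)) - 1"
    using exists_subset_sum_ln_less_prod assms by blast
  have "finite T" "\<forall>k\<in>T. finite {1..q k} \<and> {1..q k} \<noteq> {}"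
    using T assms(2) finite_subset by fastforce+
  moreover have "(\<Sum>k\<in>T. ln (real (card {1..q k}))) < (\<Prod>k\<in>T. 1 + 1 / real (card {1..q k})) - 1"
    using small by simp
  ultimately obtain a where "\<forall>S\<in>Pow T - {{}}. a S \<in> PiE S (\<lambda>k. {1..q k})"
    and "\<forall>x\<in>PiE T (\<lambda>k. {1..q k}). \<exists>S\<in>Pow T - {{}}. \<forall>k\<in>S. x k = a S k"
    by (rule product_covered_by_partial_points)
  with assms(2) T show ?thesis
    by (rule grid_covered_if_subgrid_covered)
qed

end
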